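(* Let $f\in\mathcal{A}_c(\mathbb{R})$ and $\Omega_f(s)=\int_{-\infty}^\infty v_s f$. Define the Fourier transform $\hat f$ as the second distributional derivative of $\Omega_f$, i.e. $\langle\hat f,\phi\rangle=\int_{-\infty}^\infty\Omega_f(s)\phi''(s)\,ds$ for $\phi$ in the Schwartz space $\mathcal{S}(\mathbb{R})$. Then this agrees with the Fourier transform of $f$ as a tempered distribution: for every $\phi\in\mathcal{S}(\mathbb{R})$, $\int_{-\infty}^\infty\Omega_f(s)\phi''(s)\,ds=\langle f,\hat\phi\rangle=\int_{-\infty}^\infty f\hat\phi$, where $\hat\phi(s)=\int_{-\infty}^\infty e^{-ist}\phi(t)\,dt$.
   Context: $\mathcal{B}_c(\mathbb{R})$ is the set of functions $F:[-\infty,\infty]\to\mathbb{C}$ continuous on $\mathbb{R}$ with limits $F(\pm\infty)$ existing and $F(-\infty)=0$. $\mathcal{A}_c(\mathbb{R})$ is the set of tempered distributions $f=F'$ (distributional derivative) with $F\in\mathcal{B}_c(\mathbb{R})$. For $g$ of bounded variation on $\mathbb{R}$, $\int_{-\infty}^\infty fg=F(\infty)g(\infty)-\int_{-\infty}^\infty F\,dg$. For $s,t\in\mathbb{R}$, $v_s(t)=(1-ist-e^{-ist})/t^2$ ($t\ne0$), $v_s(0)=s^2/2$. *)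

theory Defs
  imports "HOL-Analysis.Analysis"
begin

definition Bc :: "(real \<Rightarrow> complex) \<Rightarrow> bool" where
  "Bc F \<longleftrightarrow> continuous_on UNIV F \<and> (F \<longlongrightarrow> 0) at_bot \<and> (\<exists>L. (F \<longlongrightarrow> L) at_top)"

definition at_infty :: "(real \<Rightarrow> complex) \<Rightarrow> complex" where
  "at_infty g = Lim at_top g"

definition has_RS_integral ::
  "(real \<Rightarrow> complex) \<Rightarrow> (real \<Rightarrow> complex) \<Rightarrow> real \<Rightarrow> real \<Rightarrow> complex \<Rightarrow> bool" where
  "has_RS_integral F g a b I \<longleftrightarrow>
     (\<forall>\<epsilon>>0. \<exists>\<delta>>0. \<forall>(n::nat) (x::nat \<Rightarrow> real) (\<xi>::nat \<Rightarrow> real).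
        x 0 = a \<longrightarrow> x n = b \<longrightarrow>
        (\<forall>i<n. x i \<le> x (Suc i) \<and> x (Suc i) - x i < \<delta> \<and> x i \<le> \<xi> i \<and> \<xi> i \<le> x (Suc i)) \<longrightarrow>
        norm ((\<Sum>i<n. F (\<xi> i) * (g (x (Suc i)) - g (x i))) - I) < \<epsilon>)"

definition RS_integral :: "(real \<Rightarrow> complex) \<Rightarrow> (real \<Rightarrow> complex) \<Rightarrow> real \<Rightarrow> real \<Rightarrow> complex" where
  "RS_integral F g a b = (THE I. has_RS_integral F g a b I)"

definition stieltjes_integral :: "(real \<Rightarrow> complex) \<Rightarrow> (real \<Rightarrow> complex) \<Rightarrow> complex" where
  "stieltjes_integral F g = Lim (at_bot \<times>\<^sub>F at_top) (\<lambda>(a, b). RS_integral F g a b)"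

text \<open>For f = F' with F in B_c, and g of bounded variation:
  int f g = F(infinity) g(infinity) - int F dg.\<close>
definition Ac_integral :: "(real \<Rightarrow> complex) \<Rightarrow> (real \<Rightarrow> complex) \<Rightarrow> complex" where
  "Ac_integral F g = at_infty F * at_infty g - stieltjes_integral F g"

definition v :: "real \<Rightarrow> real \<Rightarrow> complex" where
  "v s t = (if t = 0 then complex_of_real (s\<^sup>2 / 2)
            else (1 - \<i> * complex_of_real (s * t) - exp (- \<i> * complex_of_real (s * t))) / complex_of_real (t\<^sup>2))"

definition Omega :: "(real \<Rightarrow> complex) \<Rightarrow> real \<Rightarrow> complex" where
  "Omega F s = Ac_integral F (v s)"

fun nderiv :: "nat \<Rightarrow> (real \<Rightarrow> complex) \<Rightarrow> real \<Rightarrow> complex" where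
  "nderiv 0 \<phi> = \<phi>"
| "nderiv (Suc n) \<phi> = (\<lambda>x. vector_derivative (nderiv n \<phi>) (at x))"

definition schwartz :: "(real \<Rightarrow> complex) \<Rightarrow> bool" where
  "schwartz \<phi> \<longleftrightarrow> (\<forall>n x. nderiv n \<phi> differentiable (at x)) \<and>
     (\<forall>m n. bounded (range (\<lambda>t. complex_of_real t ^ m * nderiv n \<phi> t)))"

definition fourier :: "(real \<Rightarrow> complex) \<Rightarrow> real \<Rightarrow> complex" where
  "fourier \<phi> s = integral UNIV (\<lambda>t. exp (- \<i> * complex_of_real (s * t)) * \<phi> t)"

end

(*
  The second s-derivative of v s t is exp (-ist), so two integrations by parts against a
  Schwartz function phi give  INT v s t * phi''(s) ds = phi^(t).

  The Stieltjes integral against an indefinite integral g of an integrable h is INT F h, so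
  the A_c integral of f = F' against g is F(oo) g(oo) - INT F h.  For g = v_s we have
  v s t -> 0 as t -> oo and h = v_dt s, hence  Omega_f(s) = - INT F(t) v_dt s t dt.  The bound
  |v_dt s t| <= C (|s| + |s|^3) / (1 + t^2) justifies Fubini, and
  INT Omega_f phi'' = - INT F H  with  H(t) = INT v_dt s t phi''(s) ds  (fourier_deriv phi).
  The same exchange of integrals, with F the indicator of [x, y], shows that phi^ is an
  indefinite integral of H; as phi^(t) -> 0 for t -> oo, - INT F H is the A_c integral of f
  against phi^.
*)
theory Submission
  imports Defs "HOL-Probability.Sinc_Integral" "HOL-Real_Asymp.Real_Asymp"
begin

section \<open>Integrals over the real line\<close>

lemma at_bot_times_at_top_neq_bot: "(at_bot \<times>\<^sub>F at_top :: (real \<times> real) filter) \<noteq> bot"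
  by (simp add: prod_filter_eq_bot)

lemma eventually_at_bot_times_at_top:
  "eventually (\<lambda>(a, b). a < -B \<and> B < b) (at_bot \<times>\<^sub>F at_top :: (real \<times> real) filter)"
proof -
  have "eventually (\<lambda>x. fst x < -B \<and> B < snd x) (at_bot \<times>\<^sub>F at_top :: (real \<times> real) filter)"
    by (intro eventually_prodI) (auto simp: eventually_at_bot_dense eventually_at_top_dense)
  then show ?thesis by (simp add: split_beta')
qed

lemma tendsto_integral_atLeastAtMost_UNIV:
  fixes f :: "real \<Rightarrow> 'a::banach"
  assumes "f integrable_on UNIV"
  shows "((\<lambda>(a, b). integral {a..b} f) \<longlongrightarrow> integral UNIV f) (at_bot \<times>\<^sub>F at_top)"
proof (rule tendstoI)
  fix e :: real assume e: "e > 0"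
  have "(f has_integral integral UNIV f) UNIV" using assms by auto
  then obtain B where "B > 0" and
    B: "\<And>a b. ball 0 B \<subseteq> cbox a b \<Longrightarrow> norm (integral (cbox a b) f - integral UNIV f) < e"
    unfolding has_integral_alt'[of f] using e by auto
  show "eventually (\<lambda>x. dist (case x of (a, b) \<Rightarrow> integral {a..b} f) (integral UNIV f) < e)
      (at_bot \<times>\<^sub>F at_top)"
    using eventually_at_bot_times_at_top[of B]
  proof (rule eventually_mono, clarify)
    fix a b :: real assume "a < - B" "B < b"
    then have "ball 0 B \<subseteq> cbox a b" by (auto simp: dist_real_def)
    then show "dist (integral {a..b} f) (integral UNIV f) < e"
      using B[of a b] by (simp add: dist_norm)
  qed
qed

lemma integral_UNIV_derivative_eq_0:
  fixes G g :: "real \<Rightarrow> 'a::banach"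
  assumes G: "\<And>x. (G has_vector_derivative g x) (at x)" and g: "g integrable_on UNIV"
    and lim: "(G \<longlongrightarrow> 0) at_infinity"
  shows "integral UNIV g = 0"
proof -
  have "((\<lambda>x. G (snd x) - G (fst x)) \<longlongrightarrow> 0 - 0) (at_bot \<times>\<^sub>F at_top)"
    by (intro tendsto_diff filterlim_compose[OF _ filterlim_snd] filterlim_compose[OF _ filterlim_fst]
        filterlim_mono[OF lim order_refl at_top_le_at_infinity]
        filterlim_mono[OF lim order_refl at_bot_le_at_infinity])
  then have "((\<lambda>(a, b). G b - G a) \<longlongrightarrow> 0) (at_bot \<times>\<^sub>F at_top)"
    by (simp add: split_beta')
  moreover have "eventually (\<lambda>x. (\<lambda>(a, b). G b - G a) x = (\<lambda>(a, b). integral {a..b} g) x)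
      (at_bot \<times>\<^sub>F at_top)"
    using eventually_at_bot_times_at_top[of 0]
  proof (rule eventually_mono, clarify)
    fix a b :: real assume "a < - 0" "0 < b"
    then have "(g has_integral G b - G a) {a..b}"
      by (intro fundamental_theorem_of_calculus) (auto intro: has_vector_derivative_at_within G)
    then show "G b - G a = integral {a..b} g" by (simp add: integral_unique)
  qed
  ultimately have "((\<lambda>(a, b). integral {a..b} g) \<longlongrightarrow> 0) (at_bot \<times>\<^sub>F at_top)"
    by (rule tendsto_cong[THEN iffD1, rotated])
  with tendsto_integral_atLeastAtMost_UNIV[OF g] show ?thesis
    by (rule tendsto_unique[OF at_bot_times_at_top_neq_bot])
qed

lemma mono_chain_le:
  fixes x :: "nat \<Rightarrow> real"
  assumes "\<forall>i<n. x i \<le> x (Suc i)" and "i \<le> j" and "j \<le> n"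
  shows "x i \<le> x j"
  by (rule lift_Suc_mono_le_ivl[of "{..<n}"]) (use assms in auto)

lemma integral_atLeastAtMost_chain:
  fixes f :: "real \<Rightarrow> 'a::banach" and x :: "nat \<Rightarrow> real"
  assumes mono: "\<forall>i<n. x i \<le> x (Suc i)" and f: "f integrable_on {x 0..x n}"
  shows "integral {x 0..x n} f = (\<Sum>i<n. integral {x i..x (Suc i)} f)"
proof -
  have "integral {x 0..x m} f = (\<Sum>i<m. integral {x i..x (Suc i)} f)" if "m \<le> n" for m
    using that
  proof (induction m)
    case (Suc m)
    have le: "x 0 \<le> x m" "x m \<le> x (Suc m)" "x (Suc m) \<le> x n"
      using mono_chain_le[OF mono] Suc.prems by auto
    have "f integrable_on {x 0..x (Suc m)}"
      by (rule integrable_on_subinterval[OF f]) (use le mono_chain_le[OF mono, of 0 n] in auto)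
    then have "integral {x 0..x (Suc m)} f = integral {x 0..x m} f + integral {x m..x (Suc m)} f"
      using Henstock_Kurzweil_Integration.integral_combine[OF le(1,2)] by metis
    then show ?case using Suc by simp
  qed simp
  then show ?thesis by simp
qed

lemma continuous_bounded_outside_interval:
  fixes f :: "real \<Rightarrow> 'a::real_normed_vector"
  assumes "continuous_on UNIV f" and "\<And>u. u \<notin> {a..b} \<Longrightarrow> norm (f u) \<le> B"
  shows "\<exists>M. \<forall>u. norm (f u) \<le> M"
proof -
  have "bounded (f ` {a..b})"
    by (rule compact_imp_bounded[OF compact_continuous_image])
       (use assms(1) continuous_on_subset in auto)
  then obtain C where "\<forall>u\<in>{a..b}. norm (f u) \<le> C" by (auto simp: bounded_iff)
  with assms(2) have "norm (f u) \<le> max B C" for u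
    by (cases "u \<in> {a..b}") (auto simp: le_max_iff_disj)
  then show ?thesis by blast
qed

lemma borel_measurable_isCont:
  fixes f :: "real \<Rightarrow> 'a::topological_space"
  assumes "\<And>x. isCont f x" shows "f \<in> borel_measurable lborel"
  using assms by (simp add: borel_measurable_continuous_onI continuous_at_imp_continuous_on)

lemma integrable_inverse_1_plus_square_lborel: "integrable lborel (\<lambda>t::real. inverse (1 + t^2))"
  using integrable_inverse_1_plus_square by (simp add: set_integrable_def)

lemma integrable_lborel_decay:
  fixes g :: "real \<Rightarrow> 'a::{banach, second_countable_topology}"
  assumes "g \<in> borel_measurable lborel" and bound: "\<And>t. norm (g t) \<le> B / (1 + t^2)"
  shows "integrable lborel g"
proof (rule Bochner_Integration.integrable_bound[OF _ assms(1)])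
  have "norm (g 0) \<le> B" using bound[of 0] by simp
  then have "B \<ge> 0" using norm_ge_zero order_trans by blast
  with bound show "AE t in lborel. norm (g t) \<le> norm (B * inverse (1 + t^2))"
    by (auto simp: divide_inverse abs_mult add_pos_nonneg)
qed (intro integrable_mult_right integrable_inverse_1_plus_square_lborel)

lemma integrable_pair_lborel_product_bound:
  fixes f :: "real \<Rightarrow> real \<Rightarrow> 'b::{banach, second_countable_topology}" and a b :: "real \<Rightarrow> real"
  assumes f: "(\<lambda>(s, t). f s t) \<in> borel_measurable (lborel \<Otimes>\<^sub>M lborel)"
    and bound: "\<And>s t. norm (f s t) \<le> a s * b t"
    and a: "integrable lborel a" and b: "integrable lborel b"
  shows "integrable (lborel \<Otimes>\<^sub>M lborel) (\<lambda>(s, t). f s t)"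
proof (rule Bochner_Integration.integrable_bound[OF _ f])
  have [measurable]: "a \<in> borel_measurable lborel" "b \<in> borel_measurable lborel" using a b by auto
  show "integrable (lborel \<Otimes>\<^sub>M lborel) (\<lambda>(s, t). a s * b t)"
  proof (rule lborel_pair.Fubini_integrable)
    have "integrable lborel (\<lambda>s. \<bar>a s\<bar> * (LINT t|lborel. \<bar>b t\<bar>))"
      using a by (intro integrable_mult_left integrable_abs)
    then show "integrable lborel (\<lambda>s. LINT t|lborel. norm (case (s, t) of (s, t) \<Rightarrow> a s * b t))"
      by (simp add: abs_mult)
    show "AE s in lborel. integrable lborel (\<lambda>t. case (s, t) of (s, t) \<Rightarrow> a s * b t)"
      using b by (simp add: integrable_mult_right)
  qed measurable
  show "AE p in lborel \<Otimes>\<^sub>M lborel. norm (case p of (s, t) \<Rightarrow> f s t) \<le> norm (case p of (s, t) \<Rightarrow> a s * b t)"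
    using bound by (auto split: prod.splits intro: order_trans[OF _ abs_ge_self])
qed

lemma integral_UNIV_swap:
  fixes f :: "real \<Rightarrow> real \<Rightarrow> 'b::euclidean_space"
  assumes f: "integrable (lborel \<Otimes>\<^sub>M lborel) (\<lambda>(s, t). f s t)"
    and "\<And>s. integrable lborel (\<lambda>t. f s t)" and "\<And>t. integrable lborel (\<lambda>s. f s t)"
  shows "integral UNIV (\<lambda>s. integral UNIV (\<lambda>t. f s t)) = integral UNIV (\<lambda>t. integral UNIV (\<lambda>s. f s t))"
proof -
  have inner: "(\<lambda>s. integral UNIV (\<lambda>t. f s t)) = (\<lambda>s. LINT t|lborel. f s t)"
    "(\<lambda>t. integral UNIV (\<lambda>s. f s t)) = (\<lambda>t. LINT s|lborel. f s t)"
    using assms(2,3) by (simp_all add: integral_lborel)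
  have "integral UNIV (\<lambda>s. LINT t|lborel. f s t) = (LINT s|lborel. LINT t|lborel. f s t)"
    by (rule integral_lborel[OF lborel_pair.integrable_fst[OF f]])
  also have "\<dots> = (LINT t|lborel. LINT s|lborel. f s t)"
    using lborel_pair.integral_fst[OF f] lborel_pair.integral_snd[OF f] by simp
  also have "\<dots> = integral UNIV (\<lambda>t. LINT s|lborel. f s t)"
    by (rule integral_lborel[OF lborel_pair.integrable_snd[OF f], symmetric])
  finally show ?thesis unfolding inner .
qed

section \<open>Riemann--Stieltjes integrals\<close>

lemma norm_RS_term_le:
  fixes F h :: "real \<Rightarrow> complex"
  assumes h: "h absolutely_integrable_on {x..y}" and Fh: "(\<lambda>t. F t * h t) integrable_on {x..y}"
    and F: "\<And>t. t \<in> {x..y} \<Longrightarrow> norm (F \<xi> - F t) \<le> e"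
  shows "norm (F \<xi> * integral {x..y} h - integral {x..y} (\<lambda>t. F t * h t))
    \<le> e * integral {x..y} (\<lambda>t. norm (h t))"
proof -
  have hi: "h integrable_on {x..y}" and hn: "(\<lambda>t. norm (h t)) integrable_on {x..y}"
    using h absolutely_integrable_on_def by blast+
  have "F \<xi> * integral {x..y} h - integral {x..y} (\<lambda>t. F t * h t)
      = integral {x..y} (\<lambda>t. (F \<xi> - F t) * h t)"
    using integral_diff[OF integrable_on_mult_right[OF hi, of "F \<xi>"] Fh]
    by (simp add: algebra_simps)
  also have "norm \<dots> \<le> integral {x..y} (\<lambda>t. e * norm (h t))"
  proof (rule integral_norm_bound_integral)
    show "(\<lambda>t. (F \<xi> - F t) * h t) integrable_on {x..y}"
      using integrable_diff[OF integrable_on_mult_right[OF hi, of "F \<xi>"] Fh]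
      by (simp add: algebra_simps)
    show "(\<lambda>t. e * norm (h t)) integrable_on {x..y}"
      using integrable_on_mult_right[OF hn] by simp
  qed (use F in \<open>auto simp: norm_mult mult_right_mono\<close>)
  finally show ?thesis by simp
qed

lemma has_RS_integral_indefinite_integral:
  fixes F h g :: "real \<Rightarrow> complex"
  assumes F: "continuous_on {a..b} F" and h: "h absolutely_integrable_on {a..b}"
    and g: "\<And>x y. a \<le> x \<Longrightarrow> x \<le> y \<Longrightarrow> y \<le> b \<Longrightarrow> g y - g x = integral {x..y} h"
  shows "has_RS_integral F g a b (integral {a..b} (\<lambda>t. F t * h t))"
  unfolding has_RS_integral_def
proof (intro allI impI)
  fix e :: real assume "e > 0"
  define A where "A = integral {a..b} (\<lambda>t. norm (h t))"
  have hn: "(\<lambda>t. norm (h t)) integrable_on {a..b}" using h absolutely_integrable_on_def by blast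
  have "A \<ge> 0" unfolding A_def by (rule integral_nonneg[OF hn]) auto
  define e' where "e' = e / (A + 1)"
  have "e' > 0" using \<open>e > 0\<close> \<open>A \<ge> 0\<close> by (simp add: e'_def)
  moreover have "uniformly_continuous_on {a..b} F"
    by (rule compact_uniformly_continuous[OF F compact_Icc])
  ultimately obtain d where "d > 0" and d: "\<And>x x'. x \<in> {a..b} \<Longrightarrow> x' \<in> {a..b} \<Longrightarrow>
      dist x' x < d \<Longrightarrow> dist (F x') (F x) < e'"
    unfolding uniformly_continuous_on_def by metis
  have Fh: "(\<lambda>t. F t * h t) absolutely_integrable_on {a..b}"
    by (rule absolutely_integrable_bounded_measurable_product[OF bilinear_times
        continuous_imp_measurable_on_sets_lebesgue[OF F] _
        compact_imp_bounded[OF compact_continuous_image[OF F compact_Icc]] h]) auto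
  show "\<exists>d>0. \<forall>n x \<xi>. x 0 = a \<longrightarrow> x n = b \<longrightarrow>
          (\<forall>i<n. x i \<le> x (Suc i) \<and> x (Suc i) - x i < d \<and> x i \<le> \<xi> i \<and> \<xi> i \<le> x (Suc i)) \<longrightarrow>
          norm ((\<Sum>i<n. F (\<xi> i) * (g (x (Suc i)) - g (x i))) - integral {a..b} (\<lambda>t. F t * h t)) < e"
  proof (intro exI[of _ d] conjI allI impI \<open>d > 0\<close>)
    fix n x \<xi> assume x0: "x 0 = a" and xn: "x n = b"
      and P: "\<forall>i<n. x i \<le> x (Suc i) \<and> x (Suc i) - x i < d \<and> x i \<le> \<xi> i \<and> \<xi> i \<le> x (Suc i)"
    have mono: "\<forall>i<n. x i \<le> x (Suc i)" using P by auto
    have sub: "{x i..x (Suc i)} \<subseteq> {a..b}" if "i < n" for i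
      using mono_chain_le[OF mono, of 0 i] mono_chain_le[OF mono, of "Suc i" n] that x0 xn by auto
    define S where "S i = integral {x i..x (Suc i)} (\<lambda>t. F t * h t)" for i
    have RS_term: "norm (F (\<xi> i) * (g (x (Suc i)) - g (x i)) - S i)
        \<le> e' * integral {x i..x (Suc i)} (\<lambda>t. norm (h t))" if i: "i < n" for i
    proof -
      have "g (x (Suc i)) - g (x i) = integral {x i..x (Suc i)} h"
        using g[of "x i" "x (Suc i)"] sub[OF i] P i by auto
      moreover have "norm (F (\<xi> i) * integral {x i..x (Suc i)} h - S i)
          \<le> e' * integral {x i..x (Suc i)} (\<lambda>t. norm (h t))"
        unfolding S_def
      proof (rule norm_RS_term_le)
        show "h absolutely_integrable_on {x i..x (Suc i)}"
          by (rule absolutely_integrable_on_subinterval[OF h sub[OF i]])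
        show "(\<lambda>t. F t * h t) integrable_on {x i..x (Suc i)}"
          using absolutely_integrable_on_subinterval[OF Fh sub[OF i]] absolutely_integrable_on_def
          by blast
        fix t assume "t \<in> {x i..x (Suc i)}"
        then have "dist (F (\<xi> i)) (F t) < e'"
          using d[of t "\<xi> i"] sub[OF i] P i by (auto simp: dist_real_def)
        then show "norm (F (\<xi> i) - F t) \<le> e'" by (simp add: dist_norm)
      qed
      ultimately show ?thesis by simp
    qed
    have "integral {a..b} (\<lambda>t. F t * h t) = (\<Sum>i<n. S i)"
      using integral_atLeastAtMost_chain[OF mono, of "\<lambda>t. F t * h t"] Fh x0 xn
      unfolding S_def absolutely_integrable_on_def by auto
    then have "norm ((\<Sum>i<n. F (\<xi> i) * (g (x (Suc i)) - g (x i))) - integral {a..b} (\<lambda>t. F t * h t))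
        = norm (\<Sum>i<n. F (\<xi> i) * (g (x (Suc i)) - g (x i)) - S i)"
      by (simp add: sum_subtractf)
    also have "\<dots> \<le> (\<Sum>i<n. e' * integral {x i..x (Suc i)} (\<lambda>t. norm (h t)))"
      by (rule order_trans[OF norm_sum sum_mono]) (use RS_term in auto)
    also have "\<dots> = e' * A"
      using integral_atLeastAtMost_chain[OF mono hn[unfolded x0[symmetric] xn[symmetric]]]
      by (simp add: A_def x0 xn sum_distrib_left)
    also have "\<dots> < e" using \<open>e > 0\<close> \<open>A \<ge> 0\<close> by (simp add: e'_def field_simps)
    finally show "norm ((\<Sum>i<n. F (\<xi> i) * (g (x (Suc i)) - g (x i))) - integral {a..b} (\<lambda>t. F t * h t))
        < e" .
  qed
qed

lemma has_RS_integral_unique: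
  assumes "a \<le> b" and I1: "has_RS_integral F g a b I1" and I2: "has_RS_integral F g a b I2"
  shows "I1 = I2"
proof (rule ccontr)
  assume "I1 \<noteq> I2"
  define e where "e = norm (I1 - I2) / 2"
  have "e > 0" using \<open>I1 \<noteq> I2\<close> by (simp add: e_def)
  obtain d1 where "d1 > 0" and d1: "\<And>n x \<xi>. x 0 = a \<Longrightarrow> x n = b \<Longrightarrow>
        (\<forall>i<n. x i \<le> x (Suc i) \<and> x (Suc i) - x i < d1 \<and> x i \<le> \<xi> i \<and> \<xi> i \<le> x (Suc i)) \<Longrightarrow>
        norm ((\<Sum>i<n. F (\<xi> i) * (g (x (Suc i)) - g (x i))) - I1) < e"
    using I1 \<open>e > 0\<close> unfolding has_RS_integral_def by meson
  obtain d2 where "d2 > 0" and d2: "\<And>n x \<xi>. x 0 = a \<Longrightarrow> x n = b \<Longrightarrow>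
        (\<forall>i<n. x i \<le> x (Suc i) \<and> x (Suc i) - x i < d2 \<and> x i \<le> \<xi> i \<and> \<xi> i \<le> x (Suc i)) \<Longrightarrow>
        norm ((\<Sum>i<n. F (\<xi> i) * (g (x (Suc i)) - g (x i))) - I2) < e"
    using I2 \<open>e > 0\<close> unfolding has_RS_integral_def by meson
  define d where "d = min d1 d2"
  have "d > 0" using \<open>d1 > 0\<close> \<open>d2 > 0\<close> by (simp add: d_def)
  obtain n :: nat where n: "(b - a) / d < n" using reals_Archimedean2 by blast
  have "n > 0" using n \<open>a \<le> b\<close> \<open>d > 0\<close>
    by (metis divide_nonneg_pos of_nat_0_less_iff diff_ge_0_iff_ge order_le_less_trans)
  define c where "c = (b - a) / n"
  define x where "x i = a + real i * c" for i :: nat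
  have step: "x (Suc i) - x i = c" for i by (simp add: x_def algebra_simps)
  have "c < d" using n \<open>n > 0\<close> \<open>d > 0\<close> by (simp add: c_def field_simps)
  moreover have "c \<ge> 0" using \<open>a \<le> b\<close> \<open>n > 0\<close> by (simp add: c_def)
  ultimately have P: "\<forall>i<n. x i \<le> x (Suc i) \<and> x (Suc i) - x i < d1 \<and> x i \<le> x i \<and> x i \<le> x (Suc i)"
      "\<forall>i<n. x i \<le> x (Suc i) \<and> x (Suc i) - x i < d2 \<and> x i \<le> x i \<and> x i \<le> x (Suc i)"
    using step by (auto simp: d_def) (metis diff_ge_0_iff_ge)+
  have x0: "x 0 = a" and xn: "x n = b" using \<open>n > 0\<close> by (auto simp: x_def c_def)
  define S where "S = (\<Sum>i<n. F (x i) * (g (x (Suc i)) - g (x i)))"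
  have "norm (I1 - I2) \<le> norm (S - I2) + norm (S - I1)"
    using norm_triangle_ineq4[of "S - I2" "S - I1"] by (simp add: algebra_simps)
  also have "\<dots> < e + e" using d1[OF x0 xn P(1)] d2[OF x0 xn P(2)] unfolding S_def by simp
  finally show False by (simp add: e_def)
qed

lemma RS_integral_indefinite_integral:
  fixes F h g :: "real \<Rightarrow> complex"
  assumes "a \<le> b" and "continuous_on {a..b} F" and "h absolutely_integrable_on {a..b}"
    and "\<And>x y. a \<le> x \<Longrightarrow> x \<le> y \<Longrightarrow> y \<le> b \<Longrightarrow> g y - g x = integral {x..y} h"
  shows "RS_integral F g a b = integral {a..b} (\<lambda>t. F t * h t)"
  unfolding RS_integral_def
  using has_RS_integral_indefinite_integral[OF assms(2-)] has_RS_integral_unique[OF assms(1)]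
  by blast

lemma Bc_bounded:
  assumes "Bc F" shows "\<exists>M. \<forall>x. norm (F x) \<le> M"
proof -
  from assms obtain L where c: "continuous_on UNIV F" and bot: "(F \<longlongrightarrow> 0) at_bot"
    and top: "(F \<longlongrightarrow> L) at_top"
    unfolding Bc_def by auto
  have "eventually (\<lambda>x. dist (F x) 0 < 1) at_bot" using bot by (rule tendstoD) simp
  then obtain A where A: "\<And>x. x \<le> A \<Longrightarrow> norm (F x) < 1"
    by (auto simp: eventually_at_bot_linorder)
  have "eventually (\<lambda>x. dist (F x) L < 1) at_top" using top by (rule tendstoD) simp
  then obtain B where B: "\<And>x. x \<ge> B \<Longrightarrow> dist (F x) L < 1"
    by (auto simp: eventually_at_top_linorder)
  have "norm (F x) \<le> norm L + 1" if "x \<notin> {A..B}" for x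
  proof (cases "x \<le> A")
    case False
    then have "dist (F x) L < 1" using B that by auto
    then show ?thesis using norm_triangle_sub[of "F x" L] by (simp add: dist_norm)
  qed (use A[of x] norm_ge_zero[of L] in linarith)
  then show ?thesis by (rule continuous_bounded_outside_interval[OF c])
qed

lemma Bc_mult_integrable:
  assumes "Bc F" and h: "integrable lborel (h :: real \<Rightarrow> complex)"
  shows "integrable lborel (\<lambda>t. F t * h t)"
proof -
  obtain M where M: "\<And>x. norm (F x) \<le> M" using Bc_bounded[OF assms(1)] by blast
  have "F \<in> borel_measurable borel"
    using assms(1) unfolding Bc_def by (blast intro: borel_measurable_continuous_onI)
  moreover have "h \<in> borel_measurable lborel" using h by (rule borel_measurable_integrable)
  ultimately have "(\<lambda>t. F t * h t) \<in> borel_measurable lborel" by measurable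
  then show ?thesis
  proof (rule Bochner_Integration.integrable_bound[OF integrable_mult_right[OF integrable_norm[OF h]]])
    show "AE t in lborel. norm (F t * h t) \<le> norm (M * norm (h t))"
      using M order_trans[OF norm_ge_zero M] by (auto simp: norm_mult intro!: mult_right_mono)
  qed
qed

lemma Ac_integral_indefinite_integral:
  fixes F g h :: "real \<Rightarrow> complex"
  assumes F: "Bc F" and g: "\<And>x y. x \<le> y \<Longrightarrow> g y - g x = integral {x..y} h"
    and h: "integrable lborel h" and gL: "(g \<longlongrightarrow> L) at_top"
  shows "Ac_integral F g = at_infty F * L - integral UNIV (\<lambda>t. F t * h t)"
proof -
  have "at_infty g = L" unfolding at_infty_def by (rule tendsto_Lim[OF _ gL]) simp
  have Fc: "continuous_on UNIV F" using F unfolding Bc_def by auto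
  have "h absolutely_integrable_on UNIV"
    using h unfolding absolutely_integrable_on_def by (intro conjI integrable_on_lborel integrable_norm)
  then have habs: "h absolutely_integrable_on {a..b}" for a b
    by (rule absolutely_integrable_on_subinterval) auto
  have "eventually (\<lambda>x. (\<lambda>(a, b). integral {a..b} (\<lambda>t. F t * h t)) x
      = (\<lambda>(a, b). RS_integral F g a b) x) (at_bot \<times>\<^sub>F at_top)"
    using eventually_at_bot_times_at_top[of 0]
  proof (rule eventually_mono, clarify)
    fix a b :: real assume "a < - 0" "0 < b"
    then show "integral {a..b} (\<lambda>t. F t * h t) = RS_integral F g a b"
      by (intro RS_integral_indefinite_integral[symmetric])
         (use Fc g habs in \<open>auto intro: continuous_on_subset\<close>)
  qed
  with tendsto_integral_atLeastAtMost_UNIV[OF integrable_on_lborel[OF Bc_mult_integrable[OF F h]]]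
  have "((\<lambda>(a, b). RS_integral F g a b) \<longlongrightarrow> integral UNIV (\<lambda>t. F t * h t)) (at_bot \<times>\<^sub>F at_top)"
    by (rule tendsto_cong[THEN iffD1, rotated])
  then have "stieltjes_integral F g = integral UNIV (\<lambda>t. F t * h t)"
    unfolding stieltjes_integral_def by (rule tendsto_Lim[OF at_bot_times_at_top_neq_bot])
  then show ?thesis unfolding Ac_integral_def \<open>at_infty g = L\<close> by simp
qed

section \<open>Schwartz functions\<close>

lemma schwartz_has_vector_derivative:
  assumes "schwartz \<phi>" shows "(nderiv n \<phi> has_vector_derivative nderiv (Suc n) \<phi> t) (at t)"
  using assms unfolding schwartz_def by (simp add: vector_derivative_works[symmetric])

lemma schwartz_isCont: "schwartz \<phi> \<Longrightarrow> isCont (nderiv n \<phi>) t"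
  using schwartz_has_vector_derivative has_vector_derivative_continuous by blast

lemma schwartz_moment_bounded:
  assumes "schwartz \<phi>" obtains A where "\<And>t. \<bar>t\<bar>^m * norm (nderiv n \<phi> t) \<le> A"
proof -
  have "bounded (range (\<lambda>t. complex_of_real t ^ m * nderiv n \<phi> t))"
    using assms unfolding schwartz_def by blast
  then obtain A where "\<forall>t. norm (complex_of_real t ^ m * nderiv n \<phi> t) \<le> A"
    by (auto simp: bounded_iff)
  then have "\<forall>t. \<bar>t\<bar>^m * norm (nderiv n \<phi> t) \<le> A" by (simp add: norm_mult norm_power)
  with that show ?thesis by blast
qed

lemma schwartz_moment_integrable:
  assumes "schwartz \<phi>" shows "integrable lborel (\<lambda>t. \<bar>t\<bar>^m * norm (nderiv n \<phi> t))"
proof -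
  obtain A1 where A1: "\<And>t. \<bar>t\<bar>^m * norm (nderiv n \<phi> t) \<le> A1"
    using schwartz_moment_bounded[OF assms, where m=m and n=n] by blast
  obtain A2 where A2: "\<And>t. \<bar>t\<bar>^(m+2) * norm (nderiv n \<phi> t) \<le> A2"
    using schwartz_moment_bounded[OF assms, where m="m+2" and n=n] by blast
  show ?thesis
  proof (rule integrable_lborel_decay)
    show "(\<lambda>t. \<bar>t\<bar>^m * norm (nderiv n \<phi> t)) \<in> borel_measurable lborel"
      using borel_measurable_isCont[OF schwartz_isCont[OF assms]] by measurable
    fix t
    have "(\<bar>t\<bar>^m * norm (nderiv n \<phi> t)) * (1 + t^2)
        = \<bar>t\<bar>^m * norm (nderiv n \<phi> t) + \<bar>t\<bar>^(m+2) * norm (nderiv n \<phi> t)"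
      by (simp add: algebra_simps power_add power2_eq_square)
    also have "\<dots> \<le> A1 + A2" using A1[of t] A2[of t] by simp
    finally show "norm (\<bar>t\<bar>^m * norm (nderiv n \<phi> t)) \<le> (A1 + A2) / (1 + t^2)"
      by (simp add: le_divide_eq add_pos_nonneg)
  qed
qed

lemma integrable_bounded_by_schwartz_moment:
  assumes "schwartz \<phi>" and "g \<in> borel_measurable lborel"
    and "\<And>t. norm (g t :: complex) \<le> c * (\<bar>t\<bar>^m * norm (nderiv n \<phi> t))"
  shows "integrable lborel g"
  by (rule Bochner_Integration.integrable_bound[OF
        integrable_mult_right[OF schwartz_moment_integrable[OF assms(1)]] assms(2)])
     (use assms(3) in \<open>auto intro: order_trans[OF _ abs_ge_self]\<close>)

lemma schwartz_moment_tendsto_0: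
  assumes "schwartz \<phi>" shows "((\<lambda>t. \<bar>t\<bar>^m * norm (nderiv n \<phi> t)) \<longlongrightarrow> 0) at_infinity"
proof -
  obtain A where A: "\<And>t. \<bar>t\<bar>^(m+1) * norm (nderiv n \<phi> t) \<le> A"
    using schwartz_moment_bounded[OF assms, where m="m+1" and n=n] by blast
  have "norm (\<bar>t\<bar>^m * norm (nderiv n \<phi> t)) \<le> \<bar>A\<bar> * norm (inverse t)" if "t \<noteq> 0" for t
    using A[of t] that by (simp add: field_simps)
  then have "eventually (\<lambda>t. norm (\<bar>t\<bar>^m * norm (nderiv n \<phi> t)) \<le> \<bar>A\<bar> * norm (inverse t))
      at_infinity"
    unfolding eventually_at_infinity by (metis norm_zero not_one_le_zero)
  moreover have "((\<lambda>t::real. \<bar>A\<bar> * norm (inverse t)) \<longlongrightarrow> 0) at_infinity"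
    using tendsto_mult_right_zero[OF tendsto_norm_zero[OF tendsto_inverse_0]] .
  ultimately show ?thesis by (rule Lim_null_comparison)
qed

section \<open>The kernel \<open>v\<close>\<close>

lemma norm_exp_minus_i_times_real [simp]: "norm (exp (- \<i> * complex_of_real u)) = 1"
  by (simp add: norm_exp_eq_Re)

lemma norm_v_numerator_le:
  "norm (1 - \<i> * complex_of_real u - exp (- \<i> * complex_of_real u)) \<le> 2 + \<bar>u\<bar>"
proof -
  have "norm (1 - \<i> * complex_of_real u - exp (- \<i> * complex_of_real u))
      \<le> norm (1 - \<i> * complex_of_real u) + 1"
    using norm_triangle_ineq4 by (metis norm_exp_minus_i_times_real)
  also have "norm (1 - \<i> * complex_of_real u) \<le> 1 + \<bar>u\<bar>"
    using norm_triangle_ineq4[of 1 "\<i> * complex_of_real u"] by (simp add: norm_mult)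
  finally show ?thesis by simp
qed

lemma v_scale: "v s t = complex_of_real (s^2) * v 1 (s * t)"
proof (cases "s = 0 \<or> t = 0")
  case False
  then show ?thesis by (simp add: v_def field_simps power2_eq_square)
qed (auto simp: v_def)

lemma norm_v1_le:
  assumes "u \<noteq> 0" shows "norm (v 1 u) \<le> (2 + \<bar>u\<bar>) / u^2"
proof -
  have "norm (v 1 u) = norm (1 - \<i> * complex_of_real u - exp (- \<i> * complex_of_real u)) / u^2"
    using assms by (simp only: v_def if_False mult_1 norm_divide norm_of_real abs_power2)
  also have "\<dots> \<le> (2 + \<bar>u\<bar>) / u^2" by (rule divide_right_mono[OF norm_v_numerator_le]) simp
  finally show ?thesis .
qed

lemma norm_v_le_decay:
  assumes "t \<noteq> 0" shows "norm (v s t) \<le> (2 + \<bar>s\<bar> * \<bar>t\<bar>) / t^2"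
proof (cases "s = 0")
  case False
  have "norm (v s t) = s^2 * norm (v 1 (s * t))"
    by (simp only: v_scale[of s t] norm_mult norm_of_real abs_power2)
  also have "\<dots> \<le> s^2 * ((2 + \<bar>s * t\<bar>) / (s * t)^2)"
    by (rule mult_left_mono[OF norm_v1_le]) (use False assms in auto)
  also have "\<dots> = (2 + \<bar>s\<bar> * \<bar>t\<bar>) / t^2" using False by (simp add: abs_mult power_mult_distrib)
  finally show ?thesis .
qed (use assms in \<open>simp add: v_scale[of 0 t] add_pos_nonneg\<close>)

lemma v_tendsto_0: "((\<lambda>t. v s t) \<longlongrightarrow> 0) at_top"
proof (rule Lim_null_comparison)
  show "eventually (\<lambda>t. norm (v s t) \<le> (2 + \<bar>s\<bar> * \<bar>t\<bar>) / t^2) at_top"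
    using eventually_gt_at_top[of 0] by eventually_elim (rule norm_v_le_decay, simp)
  show "((\<lambda>t. (2 + \<bar>s\<bar> * \<bar>t\<bar>) / t^2) \<longlongrightarrow> 0) at_top" by real_asymp
qed

definition dv1 :: "real \<Rightarrow> complex" where
  "dv1 u = (if u = 0 then - \<i> / 6 else
     (- \<i> + \<i> * exp (- \<i> * complex_of_real u)) / complex_of_real (u^2)
     - 2 * (1 - \<i> * complex_of_real u - exp (- \<i> * complex_of_real u)) / complex_of_real (u^3))"

definition v_dt :: "real \<Rightarrow> real \<Rightarrow> complex" where
  "v_dt s t = complex_of_real (s^3) * dv1 (s * t)"

lemma has_vector_derivative_v1:
  assumes "u \<noteq> 0" shows "(v 1 has_vector_derivative dv1 u) (at u)"
proof -
  define W where "W z = (1 - \<i> * z - exp (- \<i> * z)) / z^2" for z :: complex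
  define W' where
    "W' z = (- \<i> + \<i> * exp (- \<i> * z)) / z^2 - 2 * (1 - \<i> * z - exp (- \<i> * z)) / z^3"
    for z :: complex
  have "\<And>z. z \<noteq> 0 \<Longrightarrow> (W has_field_derivative W' z) (at z)"
    unfolding W_def W'_def
    by (rule derivative_eq_intros refl | simp)+
       (simp add: field_simps power2_eq_square power3_eq_cube, algebra)
  then have "((\<lambda>x. W (complex_of_real x)) has_vector_derivative W' (complex_of_real u)) (at u)"
    using has_vector_derivative_real_field[of W, of "W' (complex_of_real u)" u UNIV] assms by simp
  moreover have "W' (complex_of_real u) = dv1 u" using assms by (simp add: W'_def dv1_def)
  ultimately have "((\<lambda>x. W (complex_of_real x)) has_vector_derivative dv1 u) (at u)" by simp
  then show ?thesis
    by (rule has_vector_derivative_transform_within_open[where S="-{0}"])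
       (use assms in \<open>auto simp: W_def v_def\<close>)
qed

lemma isCont_v1: "isCont (v 1) u"
proof (cases "u = 0")
  case True
  have "((\<lambda>u. Re (v 1 u)) \<longlongrightarrow> Re (v 1 0)) (at 0)"
  proof -
    have "((\<lambda>u. (1 - cos u) / u^2) \<longlongrightarrow> 1/2) (at (0::real))" by real_asymp
    moreover have "eventually (\<lambda>u. (1 - cos u) / u^2 = Re (v 1 u)) (at (0::real))"
      by (simp add: eventually_at_filter v_def Re_exp Im_exp)
    ultimately show ?thesis using tendsto_cong by (force simp: v_def)
  qed
  moreover have "((\<lambda>u. Im (v 1 u)) \<longlongrightarrow> Im (v 1 0)) (at 0)"
  proof -
    have "((\<lambda>u. (sin u - u) / u^2) \<longlongrightarrow> 0) (at (0::real))" by real_asymp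
    moreover have "eventually (\<lambda>u. (sin u - u) / u^2 = Im (v 1 u)) (at (0::real))"
      by (simp add: eventually_at_filter v_def Re_exp Im_exp)
    ultimately show ?thesis using tendsto_cong by (force simp: v_def)
  qed
  ultimately show ?thesis unfolding isCont_def True tendsto_complex_iff by blast
qed (auto intro: has_vector_derivative_continuous has_vector_derivative_v1)

lemma isCont_dv1: "isCont dv1 u"
proof (cases "u = 0")
  case True
  have "((\<lambda>u. Re (dv1 u)) \<longlongrightarrow> Re (dv1 0)) (at 0)"
  proof -
    have "((\<lambda>u. sin u / u^2 - 2 * (1 - cos u) / u^3) \<longlongrightarrow> 0) (at (0::real))" by real_asymp
    moreover have "eventually (\<lambda>u. sin u / u^2 - 2 * (1 - cos u) / u^3 = Re (dv1 u)) (at (0::real))"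
      by (simp add: eventually_at_filter dv1_def Re_exp Im_exp)
    ultimately show ?thesis using tendsto_cong by (force simp: dv1_def)
  qed
  moreover have "((\<lambda>u. Im (dv1 u)) \<longlongrightarrow> Im (dv1 0)) (at 0)"
  proof -
    have "((\<lambda>u. (cos u - 1) / u^2 - 2 * (sin u - u) / u^3) \<longlongrightarrow> -1/6) (at (0::real))"
      by real_asymp
    moreover have "eventually (\<lambda>u. (cos u - 1) / u^2 - 2 * (sin u - u) / u^3 = Im (dv1 u))
        (at (0::real))"
      by (simp add: eventually_at_filter dv1_def Re_exp Im_exp)
    ultimately show ?thesis using tendsto_cong by (force simp: dv1_def)
  qed
  ultimately show ?thesis unfolding isCont_def True tendsto_complex_iff by blast
next
  case False
  define dv1' where "dv1' x = (- \<i> + \<i> * exp (- \<i> * complex_of_real x)) / complex_of_real (x^2)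
      - 2 * (1 - \<i> * complex_of_real x - exp (- \<i> * complex_of_real x)) / complex_of_real (x^3)"
    for x
  have "eventually (\<lambda>x. x \<noteq> 0) (nhds u)" using False by (rule t1_space_nhds)
  then have ev: "eventually (\<lambda>x. dv1 x = dv1' x) (nhds u)"
    by eventually_elim (simp add: dv1_def dv1'_def)
  have "isCont dv1' u" unfolding dv1'_def using False by (intro continuous_intros) auto
  then show ?thesis using isCont_cong[OF ev] by simp
qed

lemma norm_dv1_le:
  assumes u: "1 \<le> \<bar>u\<bar>" shows "norm (dv1 u) \<le> 8 / u^2"
proof -
  define e where "e = exp (- \<i> * complex_of_real u)"
  have A: "norm (- \<i> + \<i> * e) \<le> 2"
    using norm_triangle_ineq[of "-\<i>" "\<i> * e"] by (simp add: norm_mult e_def)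
  have B: "norm (1 - \<i> * complex_of_real u - e) \<le> 2 + \<bar>u\<bar>"
    using norm_v_numerator_le[of u] by (simp add: e_def)
  have "dv1 u = (- \<i> + \<i> * e) / complex_of_real (u^2)
      - 2 * (1 - \<i> * complex_of_real u - e) / complex_of_real (u^3)"
    using u by (auto simp: dv1_def e_def)
  then have "norm (dv1 u) \<le> norm ((- \<i> + \<i> * e) / complex_of_real (u^2))
      + norm (2 * (1 - \<i> * complex_of_real u - e) / complex_of_real (u^3))"
    using norm_triangle_ineq4 by metis
  also have "\<dots> = norm (- \<i> + \<i> * e) / u^2 + 2 * norm (1 - \<i> * complex_of_real u - e) / \<bar>u\<bar>^3"
    by (simp only: norm_divide norm_mult norm_of_real abs_power2 power_abs norm_numeral) simp
  also have "\<dots> \<le> 2 / u^2 + 2 * (2 + \<bar>u\<bar>) / \<bar>u\<bar>^3"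
    by (intro add_mono divide_right_mono mult_left_mono A B) auto
  also have "2 * (2 + \<bar>u\<bar>) / \<bar>u\<bar>^3 \<le> 6 * \<bar>u\<bar> / \<bar>u\<bar>^3"
    by (rule divide_right_mono) (use u in auto)
  also have "6 * \<bar>u\<bar> / \<bar>u\<bar>^3 = 6 / u^2"
    using u by (simp add: power2_eq_square power3_eq_cube abs_mult_self_eq field_simps)
  finally show ?thesis by simp
qed

lemma dv1_decay: obtains C where "\<And>u. norm (dv1 u) \<le> C / (1 + u^2)"
proof -
  have abs_sq: "\<bar>1 + u^2\<bar> = 1 + u^2" for u :: real by (simp add: add_pos_nonneg)
  have "continuous_on UNIV (\<lambda>u. complex_of_real (1 + u^2) * dv1 u)"
    by (intro continuous_at_imp_continuous_on ballI continuous_intros isCont_dv1)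
  moreover have "norm (complex_of_real (1 + u^2) * dv1 u) \<le> 16" if "u \<notin> {-1..1}" for u
  proof -
    have u: "1 \<le> \<bar>u\<bar>" using that by auto
    then have "1 \<le> u^2" by (metis abs_le_square_iff abs_one power_one)
    have "norm (complex_of_real (1 + u^2) * dv1 u) = (1 + u^2) * norm (dv1 u)"
      by (simp only: norm_mult norm_of_real abs_sq)
    also have "\<dots> \<le> (2 * u^2) * (8 / u^2)"
      by (intro mult_mono norm_dv1_le u) (use \<open>1 \<le> u^2\<close> in auto)
    also have "\<dots> = 16" using u by simp
    finally show ?thesis .
  qed
  ultimately have "\<exists>M. \<forall>u. norm (complex_of_real (1 + u^2) * dv1 u) \<le> M"
    by (rule continuous_bounded_outside_interval)
  then obtain M where "\<And>u. norm (complex_of_real (1 + u^2) * dv1 u) \<le> M" by blast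
  then have "(1 + u^2) * norm (dv1 u) \<le> M" for u by (simp only: norm_mult norm_of_real abs_sq)
  then have "norm (dv1 u) \<le> M / (1 + u^2)" for u
    by (subst pos_le_divide_eq) (simp_all add: add_pos_nonneg mult.commute)
  with that show ?thesis by blast
qed

lemma has_vector_derivative_v_t:
  assumes "s * t \<noteq> 0" shows "((\<lambda>t. v s t) has_vector_derivative v_dt s t) (at t)"
proof -
  have "((\<lambda>t. s * t) has_vector_derivative s) (at t)"
    by (auto intro!: derivative_eq_intros simp: has_real_derivative_iff_has_vector_derivative[symmetric])
  then have "((v 1 \<circ> (\<lambda>t. s * t)) has_vector_derivative (s *\<^sub>R dv1 (s * t))) (at t)"
    by (rule vector_diff_chain_at) (use has_vector_derivative_v1 assms in simp)
  then have "((\<lambda>t. complex_of_real (s^2) * v 1 (s * t)) has_vector_derivative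
      (complex_of_real (s^2) * (s *\<^sub>R dv1 (s * t)))) (at t)"
    unfolding comp_def by (rule has_vector_derivative_mult_right)
  then show ?thesis
    by (simp add: v_scale[of s] v_dt_def scaleR_conv_of_real power2_eq_square power3_eq_cube mult.assoc)
qed

lemma isCont_v_t: "isCont (\<lambda>t. v s t) t"
  unfolding v_scale[of s] by (intro continuous_intros isCont_o2[where g="v 1", OF _ isCont_v1])

lemma isCont_v_dt: "isCont (\<lambda>p. v_dt (fst p) (snd p)) p"
  unfolding v_dt_def by (intro continuous_intros isCont_o2[where g=dv1, OF _ isCont_dv1])

lemma v_diff_eq_integral_v_dt:
  assumes "x \<le> y" shows "v s y - v s x = integral {x..y} (v_dt s)"
proof (cases "s = 0")
  case True
  then show ?thesis by (simp add: v_scale[of 0] v_dt_def[abs_def])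
next
  case False
  have "(v_dt s has_integral v s y - v s x) {x..y}"
  proof (rule fundamental_theorem_of_calculus_interior_strong[of "{0}"])
    show "continuous_on {x..y} (v s)"
      by (rule continuous_at_imp_continuous_on) (use isCont_v_t in auto)
    fix t assume "t \<in> {x<..<y} - {0}"
    then show "(v s has_vector_derivative v_dt s t) (at t)"
      using has_vector_derivative_v_t[of s t] False by auto
  qed (use assms in auto)
  then show ?thesis by (simp add: integral_unique)
qed

lemma norm_v_dt_le: obtains C where "C \<ge> 0"
  and "\<And>s t. norm (v_dt s t) \<le> C * (\<bar>s\<bar> + \<bar>s\<bar>^3) / (1 + t^2)"
proof -
  obtain C where C: "\<And>u. norm (dv1 u) \<le> C / (1 + u^2)" using dv1_decay by blast
  have "C \<ge> 0" using C[of 0] order_trans[OF norm_ge_zero] by simp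
  have "norm (v_dt s t) \<le> C * (\<bar>s\<bar> + \<bar>s\<bar>^3) / (1 + t^2)" for s t
  proof -
    define a where "a = \<bar>s\<bar>"
    have "(a + a^3) * (1 + a^2 * t^2) = a^3 * (1 + t^2) + a * (1 + a^4 * t^2)" by algebra
    moreover have "0 \<le> a * (1 + a^4 * t^2)" by (simp add: a_def)
    ultimately have "a^3 * (1 + t^2) \<le> (a + a^3) * (1 + (s * t)^2)"
      by (simp add: a_def power_mult_distrib)
    then have "\<bar>s\<bar>^3 / (1 + (s * t)^2) \<le> (\<bar>s\<bar> + \<bar>s\<bar>^3) / (1 + t^2)"
      by (simp add: a_def divide_le_eq le_divide_eq add_pos_nonneg)
    from mult_left_mono[OF this \<open>C \<ge> 0\<close>]
    have "\<bar>s\<bar>^3 * (C / (1 + (s * t)^2)) \<le> C * (\<bar>s\<bar> + \<bar>s\<bar>^3) / (1 + t^2)"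
      by (simp add: field_simps)
    moreover have "norm (v_dt s t) \<le> \<bar>s\<bar>^3 * (C / (1 + (s * t)^2))"
      unfolding v_dt_def norm_mult norm_of_real power_abs by (intro mult_left_mono C) auto
    ultimately show ?thesis by linarith
  qed
  with \<open>C \<ge> 0\<close> that show ?thesis by blast
qed

lemma integrable_v_dt: "integrable lborel (v_dt s)"
proof -
  obtain C where "\<And>s t. norm (v_dt s t) \<le> C * (\<bar>s\<bar> + \<bar>s\<bar>^3) / (1 + t^2)"
    using norm_v_dt_le by blast
  moreover have "isCont (v_dt s) t" for t
    unfolding v_dt_def by (intro continuous_intros isCont_o2[where g=dv1, OF _ isCont_dv1])
  ultimately show ?thesis by (intro integrable_lborel_decay borel_measurable_isCont)
qed

lemma Omega_eq_integral:
  assumes "Bc F" shows "Omega F s = - integral UNIV (\<lambda>t. F t * v_dt s t)"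
  unfolding Omega_def
  using Ac_integral_indefinite_integral[OF assms v_diff_eq_integral_v_dt integrable_v_dt v_tendsto_0]
  by simp

definition v_ds :: "real \<Rightarrow> real \<Rightarrow> complex" where
  "v_ds s t = (if t = 0 then complex_of_real s else
     (- \<i> * complex_of_real t + \<i> * complex_of_real t * exp (- \<i> * complex_of_real (s * t)))
       / complex_of_real (t^2))"

lemma has_vector_derivative_v_s: "((\<lambda>s. v s t) has_vector_derivative v_ds s t) (at s)"
proof (cases "t = 0")
  case True
  have "((\<lambda>s. complex_of_real (s^2 / 2)) has_vector_derivative complex_of_real s) (at s)"
    by (rule derivative_eq_intros refl | simp)+
  then show ?thesis using True by (simp add: v_def v_ds_def)
next
  case False
  define T where "T = complex_of_real t"
  have "T \<noteq> 0" using False by (simp add: T_def)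
  define f where "f z = (1 - \<i> * (z * T) - exp (- \<i> * (z * T))) / T^2" for z
  have "(f has_field_derivative (- \<i> * T + \<i> * T * exp (- \<i> * (complex_of_real s * T))) / T^2)
      (at (complex_of_real s))"
    unfolding f_def by (rule derivative_eq_intros refl)+
      (use \<open>T \<noteq> 0\<close> in \<open>simp_all add: field_simps power2_eq_square\<close>)
  from has_vector_derivative_real_field[OF this, of UNIV]
  have "((\<lambda>x. f (complex_of_real x)) has_vector_derivative
      (- \<i> * T + \<i> * T * exp (- \<i> * (complex_of_real s * T))) / T^2) (at s)"
    by simp
  moreover have "(\<lambda>x. f (complex_of_real x)) = (\<lambda>s. v s t)"
    using False by (simp add: fun_eq_iff f_def v_def T_def)
  moreover have "(- \<i> * T + \<i> * T * exp (- \<i> * (complex_of_real s * T))) / T^2 = v_ds s t"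
    using False by (simp add: v_ds_def T_def)
  ultimately show ?thesis by simp
qed

lemma has_vector_derivative_v_ds:
  "((\<lambda>s. v_ds s t) has_vector_derivative exp (- \<i> * complex_of_real (s * t))) (at s)"
proof (cases "t = 0")
  case True
  have "((\<lambda>s. complex_of_real s) has_vector_derivative complex_of_real 1) (at s)"
    by (rule derivative_eq_intros refl | simp)+
  then show ?thesis using True by (simp add: v_ds_def)
next
  case False
  define T where "T = complex_of_real t"
  have "T \<noteq> 0" using False by (simp add: T_def)
  define f where "f z = (- \<i> * T + \<i> * T * exp (- \<i> * (z * T))) / T^2" for z
  have "(f has_field_derivative exp (- \<i> * (complex_of_real s * T))) (at (complex_of_real s))"
    unfolding f_def by (rule derivative_eq_intros refl)+
      (use \<open>T \<noteq> 0\<close> in \<open>simp_all add: field_simps power2_eq_square\<close>)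
  from has_vector_derivative_real_field[OF this, of UNIV]
  have "((\<lambda>x. f (complex_of_real x)) has_vector_derivative exp (- \<i> * (complex_of_real s * T))) (at s)"
    by simp
  moreover have "(\<lambda>x. f (complex_of_real x)) = (\<lambda>s. v_ds s t)"
    using False by (simp add: fun_eq_iff f_def v_ds_def T_def)
  ultimately show ?thesis by (simp add: T_def)
qed

lemma norm_v_le: obtains M where "\<And>s t. norm (v s t) \<le> M * s^2"
proof -
  have "continuous_on UNIV (v 1)" by (intro continuous_at_imp_continuous_on ballI isCont_v1)
  moreover have "norm (v 1 u) \<le> 3" if "u \<notin> {-1..1}" for u
  proof -
    have u: "1 \<le> \<bar>u\<bar>" using that by auto
    then have "\<bar>u\<bar> * 1 \<le> \<bar>u\<bar> * \<bar>u\<bar>" by (intro mult_left_mono) auto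
    then have "2 + \<bar>u\<bar> \<le> 3 * u^2" using u by (simp add: power2_eq_square abs_mult_self_eq)
    then have "(2 + \<bar>u\<bar>) / u^2 \<le> 3" using u by (simp add: divide_le_eq)
    then show ?thesis using norm_v1_le[of u] u by fastforce
  qed
  ultimately have "\<exists>M. \<forall>u. norm (v 1 u) \<le> M" by (rule continuous_bounded_outside_interval)
  then obtain M where M: "\<And>u. norm (v 1 u) \<le> M" by blast
  have "norm (v s t) \<le> M * s^2" for s t
  proof -
    have "norm (v s t) = s^2 * norm (v 1 (s * t))"
      by (simp only: v_scale[of s t] norm_mult norm_of_real abs_power2)
    also have "\<dots> \<le> s^2 * M" by (rule mult_left_mono[OF M]) simp
    finally show ?thesis by (simp add: mult.commute)
  qed
  with that show ?thesis by blast
qed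

lemma norm_v_ds_le: obtains c where "\<And>s. norm (v_ds s t) \<le> \<bar>s\<bar> + c"
proof (cases "t = 0")
  case True
  then show ?thesis using that[of 0] by (simp add: v_ds_def)
next
  case False
  have "norm (v_ds s t) \<le> \<bar>s\<bar> + 2 / \<bar>t\<bar>" for s
  proof -
    have "norm (- \<i> * complex_of_real t + \<i> * complex_of_real t * exp (- \<i> * complex_of_real (s * t)))
        \<le> norm (- \<i> * complex_of_real t) + norm (\<i> * complex_of_real t * exp (- \<i> * complex_of_real (s * t)))"
      by (rule norm_triangle_ineq)
    also have "\<dots> = 2 * \<bar>t\<bar>" by (simp add: norm_mult)
    finally have "norm (v_ds s t) \<le> 2 * \<bar>t\<bar> / t^2"
      using False by (simp only: v_ds_def if_False norm_divide norm_of_real abs_power2)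
        (erule divide_right_mono, simp)
    also have "\<dots> = 2 / \<bar>t\<bar>"
      using False by (simp add: power2_eq_square field_simps del: abs_mult_self_eq)
    finally show ?thesis by simp
  qed
  with that show ?thesis by blast
qed

section \<open>The Fourier transform\<close>

lemma integrable_v_mult_nderiv2:
  assumes "schwartz \<phi>" shows "integrable lborel (\<lambda>s. v s t * nderiv 2 \<phi> s)"
proof -
  obtain M where M: "\<And>s t. norm (v s t) \<le> M * s^2" using norm_v_le by blast
  show ?thesis
  proof (rule integrable_bounded_by_schwartz_moment[OF assms, where c=M and m=2 and n=2])
    show "(\<lambda>s. v s t * nderiv 2 \<phi> s) \<in> borel_measurable lborel"
      by (intro borel_measurable_isCont continuous_mult
          has_vector_derivative_continuous[OF has_vector_derivative_v_s] schwartz_isCont[OF assms])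
    show "norm (v s t * nderiv 2 \<phi> s) \<le> M * (\<bar>s\<bar>^2 * norm (nderiv 2 \<phi> s))" for s
      using mult_right_mono[OF M[of s t] norm_ge_zero[of "nderiv 2 \<phi> s"]]
      by (simp add: norm_mult mult.assoc)
  qed
qed

lemma v_boundary_term_tendsto_0:
  assumes "schwartz \<phi>"
  shows "((\<lambda>s. v s t * nderiv 1 \<phi> s - v_ds s t * \<phi> s) \<longlongrightarrow> 0) at_infinity"
proof -
  obtain M where M: "\<And>s t. norm (v s t) \<le> M * s^2" using norm_v_le by blast
  obtain c where c: "\<And>s. norm (v_ds s t) \<le> \<bar>s\<bar> + c" using norm_v_ds_le by blast
  let ?g = "\<lambda>s. M * (\<bar>s\<bar>^2 * norm (nderiv 1 \<phi> s)) + \<bar>s\<bar>^1 * norm (nderiv 0 \<phi> s)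
    + c * (\<bar>s\<bar>^0 * norm (nderiv 0 \<phi> s))"
  have "norm (v s t * nderiv 1 \<phi> s - v_ds s t * \<phi> s) \<le> ?g s" for s
  proof -
    have "norm (v s t * nderiv 1 \<phi> s - v_ds s t * \<phi> s)
        \<le> norm (v s t) * norm (nderiv 1 \<phi> s) + norm (v_ds s t) * norm (\<phi> s)"
      unfolding norm_mult[symmetric] by (rule norm_triangle_ineq4)
    also have "\<dots> \<le> M * s^2 * norm (nderiv 1 \<phi> s) + (\<bar>s\<bar> + c) * norm (\<phi> s)"
      by (intro add_mono mult_right_mono M c norm_ge_zero)
    also have "\<dots> = ?g s" by (simp add: algebra_simps)
    finally show ?thesis .
  qed
  then have "eventually (\<lambda>s. norm (v s t * nderiv 1 \<phi> s - v_ds s t * \<phi> s) \<le> ?g s) at_infinity"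
    by simp
  moreover have "(?g \<longlongrightarrow> 0) at_infinity"
    by (intro tendsto_add_zero tendsto_mult_right_zero schwartz_moment_tendsto_0[OF assms])
  ultimately show ?thesis by (rule Lim_null_comparison)
qed

lemma integral_v_mult_nderiv2:
  assumes "schwartz \<phi>" shows "integral UNIV (\<lambda>s. v s t * nderiv 2 \<phi> s) = fourier \<phi> t"
proof -
  define e where "e s = exp (- \<i> * complex_of_real (s * t))" for s
  have "integrable lborel (\<lambda>s. e s * \<phi> s)"
  proof (rule integrable_bounded_by_schwartz_moment[OF assms, where c=1 and m=0 and n=0])
    show "(\<lambda>s. e s * \<phi> s) \<in> borel_measurable lborel"
      using schwartz_isCont[OF assms, where n=0]
      by (intro borel_measurable_isCont) (simp add: e_def continuous_intros)
  qed (simp add: e_def norm_mult)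
  note integrable = integrable_v_mult_nderiv2[OF assms] this
  have "integral UNIV (\<lambda>s. v s t * nderiv 2 \<phi> s - e s * \<phi> s) = 0"
  proof (rule integral_UNIV_derivative_eq_0[OF _ _ v_boundary_term_tendsto_0[OF assms]])
    fix s
    have "((\<lambda>s. v s t * nderiv 1 \<phi> s - v_ds s t * \<phi> s) has_vector_derivative
        (v s t * nderiv 2 \<phi> s + v_ds s t * nderiv 1 \<phi> s) - (v_ds s t * nderiv 1 \<phi> s + e s * \<phi> s))
        (at s)"
      unfolding e_def
      using schwartz_has_vector_derivative[OF assms, of 0 s] schwartz_has_vector_derivative[OF assms, of 1 s]
      by (intro has_vector_derivative_diff has_vector_derivative_mult
          has_vector_derivative_v_s has_vector_derivative_v_ds) (simp_all add: numeral_2_eq_2)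
    then show "((\<lambda>s. v s t * nderiv 1 \<phi> s - v_ds s t * \<phi> s) has_vector_derivative
        v s t * nderiv 2 \<phi> s - e s * \<phi> s) (at s)"
      by (simp add: algebra_simps)
  qed (intro integrable_on_lborel Bochner_Integration.integrable_diff integrable)
  then have "integral UNIV (\<lambda>s. v s t * nderiv 2 \<phi> s) = integral UNIV (\<lambda>s. e s * \<phi> s)"
    using integral_diff[OF integrable_on_lborel integrable_on_lborel, OF integrable] by simp
  also have "\<dots> = fourier \<phi> t" unfolding fourier_def e_def by (simp only: mult.commute[of _ t])
  finally show ?thesis .
qed

lemma integrable_v_dt_product:
  fixes G :: "real \<Rightarrow> complex"
  assumes \<phi>: "schwartz \<phi>" and G: "G \<in> borel_measurable lborel" and bound: "\<And>t. norm (G t) \<le> M"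
  shows "integrable (lborel \<Otimes>\<^sub>M lborel) (\<lambda>(s, t). G t * v_dt s t * nderiv 2 \<phi> s)"
    and "\<And>s. integrable lborel (\<lambda>t. G t * v_dt s t * nderiv 2 \<phi> s)"
    and "\<And>t. integrable lborel (\<lambda>s. G t * v_dt s t * nderiv 2 \<phi> s)"
proof -
  obtain C where "C \<ge> 0" and C: "\<And>s t. norm (v_dt s t) \<le> C * (\<bar>s\<bar> + \<bar>s\<bar>^3) / (1 + t^2)"
    using norm_v_dt_le by blast
  have "M \<ge> 0" using bound[of 0] order_trans[OF norm_ge_zero] by blast
  define a where "a s = M * C * (\<bar>s\<bar>^1 * norm (nderiv 2 \<phi> s) + \<bar>s\<bar>^3 * norm (nderiv 2 \<phi> s))"
    for s
  define b where "b t = inverse (1 + t^2)" for t :: real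
  have a: "integrable lborel a" unfolding a_def
    by (intro integrable_mult_right Bochner_Integration.integrable_add schwartz_moment_integrable[OF \<phi>])
  have b: "integrable lborel b" unfolding b_def by (rule integrable_inverse_1_plus_square_lborel)
  have ab: "norm (G t * v_dt s t * nderiv 2 \<phi> s) \<le> a s * b t" for s t
  proof -
    have "norm (G t * v_dt s t * nderiv 2 \<phi> s) = norm (G t) * norm (v_dt s t) * norm (nderiv 2 \<phi> s)"
      by (simp add: norm_mult)
    also have "\<dots> \<le> M * (C * (\<bar>s\<bar> + \<bar>s\<bar>^3) / (1 + t^2)) * norm (nderiv 2 \<phi> s)"
      using \<open>M \<ge> 0\<close> \<open>C \<ge> 0\<close> by (intro mult_mono bound C) (auto simp: add_pos_nonneg)
    also have "\<dots> = a s * b t" by (simp add: a_def b_def divide_inverse algebra_simps)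
    finally show ?thesis .
  qed
  have [measurable]: "G \<in> borel_measurable borel" "nderiv 2 \<phi> \<in> borel_measurable borel"
    using G borel_measurable_isCont[OF schwartz_isCont[OF \<phi>]] by simp_all
  have "(\<lambda>p. v_dt (fst p) (snd p)) \<in> borel_measurable borel"
    by (intro borel_measurable_continuous_onI continuous_at_imp_continuous_on ballI isCont_v_dt)
  then have "(\<lambda>(s, t). v_dt s t) \<in> borel_measurable (lborel \<Otimes>\<^sub>M lborel)"
    by (simp add: lborel_prod case_prod_beta')
  then have "(\<lambda>p. G (snd p) * (case p of (s, t) \<Rightarrow> v_dt s t) * nderiv 2 \<phi> (fst p))
      \<in> borel_measurable (lborel \<Otimes>\<^sub>M lborel)"
    by measurable
  then have m: "(\<lambda>(s, t). G t * v_dt s t * nderiv 2 \<phi> s) \<in> borel_measurable (lborel \<Otimes>\<^sub>M lborel)"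
    by (simp add: case_prod_beta')
  show "integrable (lborel \<Otimes>\<^sub>M lborel) (\<lambda>(s, t). G t * v_dt s t * nderiv 2 \<phi> s)"
    by (rule integrable_pair_lborel_product_bound[OF m ab a b])
  show "integrable lborel (\<lambda>t. G t * v_dt s t * nderiv 2 \<phi> s)" for s
    using measurable_Pair2[OF m, of s] ab
    by (intro Bochner_Integration.integrable_bound[OF integrable_mult_right[OF b, of "a s"]])
       (auto intro: order_trans[OF _ abs_ge_self])
  show "integrable lborel (\<lambda>s. G t * v_dt s t * nderiv 2 \<phi> s)" for t
    using measurable_Pair1[OF m, of t] ab
    by (intro Bochner_Integration.integrable_bound[OF integrable_mult_left[OF a, of "b t"]])
       (auto intro: order_trans[OF _ abs_ge_self])
qed

definition fourier_deriv :: "(real \<Rightarrow> complex) \<Rightarrow> real \<Rightarrow> complex" where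
  "fourier_deriv \<phi> t = integral UNIV (\<lambda>s. v_dt s t * nderiv 2 \<phi> s)"

lemma integral_swap_v_dt:
  fixes G :: "real \<Rightarrow> complex"
  assumes \<phi>: "schwartz \<phi>" and "G \<in> borel_measurable lborel" and "\<And>t. norm (G t) \<le> M"
  shows "integral UNIV (\<lambda>s. integral UNIV (\<lambda>t. G t * v_dt s t) * nderiv 2 \<phi> s)
    = integral UNIV (\<lambda>t. G t * fourier_deriv \<phi> t)"
proof -
  have "integral UNIV (\<lambda>s. integral UNIV (\<lambda>t. G t * v_dt s t) * nderiv 2 \<phi> s)
      = integral UNIV (\<lambda>s. integral UNIV (\<lambda>t. G t * v_dt s t * nderiv 2 \<phi> s))"
    by (simp only: integral_mult_left)
  also have "\<dots> = integral UNIV (\<lambda>t. integral UNIV (\<lambda>s. G t * v_dt s t * nderiv 2 \<phi> s))"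
    by (rule integral_UNIV_swap[OF integrable_v_dt_product[OF assms]])
  also have "\<dots> = integral UNIV (\<lambda>t. G t * fourier_deriv \<phi> t)"
    by (simp only: fourier_deriv_def mult.assoc integral_mult_right)
  finally show ?thesis .
qed

lemma integrable_fourier_deriv:
  assumes "schwartz \<phi>" shows "integrable lborel (fourier_deriv \<phi>)"
proof -
  have "(\<lambda>_. 1 :: complex) \<in> borel_measurable lborel" and "\<And>t. norm ((\<lambda>_. 1 :: complex) t) \<le> 1"
    by simp_all
  note integrable = integrable_v_dt_product[OF assms this]
  have "integrable lborel (\<lambda>t. LINT s|lborel. 1 * v_dt s t * nderiv 2 \<phi> s)"
    using lborel_pair.integrable_snd[OF integrable(1)] by simp
  moreover have "fourier_deriv \<phi> = (\<lambda>t. LINT s|lborel. 1 * v_dt s t * nderiv 2 \<phi> s)"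
    using integral_lborel[OF integrable(3)] by (simp add: fourier_deriv_def fun_eq_iff)
  ultimately show ?thesis by simp
qed

lemma fourier_diff_eq_integral:
  assumes \<phi>: "schwartz \<phi>" and "x \<le> y"
  shows "fourier \<phi> y - fourier \<phi> x = integral {x..y} (fourier_deriv \<phi>)"
proof -
  have inner: "integral UNIV (\<lambda>t. indicator {x..y} t * v_dt s t) = v s y - v s x" for s
    unfolding indicator_times_eq_if integral_restrict_UNIV
    using v_diff_eq_integral_v_dt[OF \<open>x \<le> y\<close>] by simp
  have "fourier \<phi> y - fourier \<phi> x = integral UNIV (\<lambda>s. (v s y - v s x) * nderiv 2 \<phi> s)"
    unfolding left_diff_distrib
    by (simp only: integral_diff[OF integrable_on_lborel integrable_on_lborel,
          OF integrable_v_mult_nderiv2[OF \<phi>] integrable_v_mult_nderiv2[OF \<phi>]]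
        integral_v_mult_nderiv2[OF \<phi>])
  also have "\<dots> = integral UNIV (\<lambda>s. integral UNIV (\<lambda>t. indicator {x..y} t * v_dt s t) * nderiv 2 \<phi> s)"
    by (simp only: inner)
  also have "\<dots> = integral UNIV (\<lambda>t. indicator {x..y} t * fourier_deriv \<phi> t)"
    by (rule integral_swap_v_dt[OF \<phi>, where M=1]) (measurable, simp add: indicator_def)
  also have "\<dots> = integral {x..y} (fourier_deriv \<phi>)"
    unfolding indicator_times_eq_if integral_restrict_UNIV ..
  finally show ?thesis .
qed

lemma fourier_tendsto_0:
  assumes \<phi>: "schwartz \<phi>" shows "(fourier \<phi> \<longlongrightarrow> 0) at_top"
proof (rule Lim_null_comparison)
  define A0 where "A0 = integral UNIV (\<lambda>s. \<bar>s\<bar>^0 * norm (nderiv 2 \<phi> s))"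
  define A1 where "A1 = integral UNIV (\<lambda>s. \<bar>s\<bar>^1 * norm (nderiv 2 \<phi> s))"
  note integrable = schwartz_moment_integrable[OF \<phi>, where m=0 and n=2]
    schwartz_moment_integrable[OF \<phi>, where m=1 and n=2]
  show "eventually (\<lambda>t. norm (fourier \<phi> t) \<le> 2 / t^2 * A0 + 1 / t * A1) at_top"
    using eventually_gt_at_top[of 0]
  proof eventually_elim
    case (elim t)
    have "norm (fourier \<phi> t) = norm (integral UNIV (\<lambda>s. v s t * nderiv 2 \<phi> s))"
      by (simp only: integral_v_mult_nderiv2[OF \<phi>])
    also have "\<dots> \<le> integral UNIV (\<lambda>s. 2 / t^2 * (\<bar>s\<bar>^0 * norm (nderiv 2 \<phi> s))
        + 1 / t * (\<bar>s\<bar>^1 * norm (nderiv 2 \<phi> s)))"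
    proof (rule integral_norm_bound_integral)
      fix s
      have "norm (v s t * nderiv 2 \<phi> s) \<le> (2 + \<bar>s\<bar> * \<bar>t\<bar>) / t^2 * norm (nderiv 2 \<phi> s)"
        unfolding norm_mult by (rule mult_right_mono[OF norm_v_le_decay]) (use elim in auto)
      then show "norm (v s t * nderiv 2 \<phi> s) \<le> 2 / t^2 * (\<bar>s\<bar>^0 * norm (nderiv 2 \<phi> s))
          + 1 / t * (\<bar>s\<bar>^1 * norm (nderiv 2 \<phi> s))"
        using elim by (simp add: field_simps power2_eq_square)
    qed (intro integrable_on_lborel integrable_v_mult_nderiv2[OF \<phi>]
        Bochner_Integration.integrable_add integrable_mult_right integrable)+
    also have "\<dots> = 2 / t^2 * A0 + 1 / t * A1"
      unfolding A0_def A1_def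
      by (simp only: integral_add integrable_on_mult_right integrable_on_lborel integrable
          integral_mult_right)
    finally show ?case .
  qed
  show "((\<lambda>t. 2 / t^2 * A0 + 1 / t * A1) \<longlongrightarrow> 0) at_top" by real_asymp
qed

theorem mainTheorem3:
  fixes F :: "real \<Rightarrow> complex" and \<phi> :: "real \<Rightarrow> complex"
  assumes "Bc F" and "schwartz \<phi>"
  shows "integral UNIV (\<lambda>s. Omega F s * nderiv 2 \<phi> s) = Ac_integral F (fourier \<phi>)"
proof -
  obtain M where "\<And>t. norm (F t) \<le> M" using Bc_bounded[OF assms(1)] by blast
  moreover have "F \<in> borel_measurable lborel"
    using assms(1) unfolding Bc_def by (simp add: borel_measurable_continuous_onI)
  ultimately have swap: "integral UNIV (\<lambda>s. integral UNIV (\<lambda>t. F t * v_dt s t) * nderiv 2 \<phi> s)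
      = integral UNIV (\<lambda>t. F t * fourier_deriv \<phi> t)"
    by (intro integral_swap_v_dt[OF assms(2)])
  have "integral UNIV (\<lambda>s. Omega F s * nderiv 2 \<phi> s)
      = integral UNIV (\<lambda>s. - (integral UNIV (\<lambda>t. F t * v_dt s t) * nderiv 2 \<phi> s))"
    by (simp only: Omega_eq_integral[OF assms(1)] mult_minus_left)
  also have "\<dots> = - integral UNIV (\<lambda>s. integral UNIV (\<lambda>t. F t * v_dt s t) * nderiv 2 \<phi> s)"
    by (rule integral_neg)
  also have "\<dots> = - integral UNIV (\<lambda>t. F t * fourier_deriv \<phi> t)" by (simp only: swap)
  also have "\<dots> = Ac_integral F (fourier \<phi>)"
    using Ac_integral_indefinite_integral[OF assms(1) fourier_diff_eq_integral[OF assms(2)]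
        integrable_fourier_deriv[OF assms(2)] fourier_tendsto_0[OF assms(2)]]
    by simp
  finally show ?thesis .
qed

end
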